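(* Let $\Omega$ be a finite set, $(H_i\mid i\in\Omega)$ finite abelian groups, $h_i=|H_i|$, $\mathbf{H}=\prod_{i\in\Omega}H_i$, and $\mathbf{P}=(\Omega,\preccurlyeq_{\mathbf{P}})$ a poset. Let $\alpha\in\hat{\mathbf{H}}$ with $\langle\mathrm{supp}(\alpha)\rangle_{\overline{\mathbf{P}}}=D$. Then $$F(\alpha)=\sum_{I\in\mathcal{I}(\mathbf{P}),\ I\subseteq(\Omega-D)\cup\min_{\mathbf{P}}(D)}(-1)^{|I\cap D|}\Big(\prod_{i\in I-\max_{\mathbf{P}}(I)}h_i\Big)\Big(\prod_{i\in\max_{\mathbf{P}}(I)-\min_{\mathbf{P}}(D)}(h_i-1)\Big)x^{|I|}.$$
   Context: $\hat{\mathbf{H}}$ is the character group of $\mathbf{H}$, identified with $\prod_i\hat{H_i}$ via $\alpha(\beta)=\prod_i\alpha_{(i)}(\beta_{(i)})$; $\mathrm{supp}$ of a codeword is the set of coordinates where it is not the identity. $\mathcal{I}(\mathbf{P})$ is the set of ideals (down-closed subsets) of $\mathbf{P}$; $\max_{\mathbf{P}}(B)$, $\min_{\mathbf{P}}(B)$ are the sets of maximal, minimal elements of $B$ w.r.t. $\preccurlyeq_{\mathbf{P}}$. For a poset $\mathbf{Q}$ on $\Omega$, $\langle B\rangle_{\mathbf{Q}}$ is the down-closure of $B$ in $\mathbf{Q}$, $\mathrm{wt}_{\mathbf{Q}}(\beta)=|\langle\mathrm{supp}(\beta)\rangle_{\mathbf{Q}}|$. $\overline{\mathbf{P}}$ is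 the dual poset. With $n=|\Omega|$, $F(\alpha)=\sum_{l=0}^{n}\big(\sum_{\beta\in\mathbf{H},\ \mathrm{wt}_{\mathbf{P}}(\beta)=l}\alpha(\beta)\big)x^l$. *)

theory Defs
  imports "HOL-Algebra.Group" "HOL-Computational_Algebra.Polynomial"
begin

definition poset_on :: "'i set \<Rightarrow> ('i \<Rightarrow> 'i \<Rightarrow> bool) \<Rightarrow> bool" where
  "poset_on \<Omega> leq \<longleftrightarrow>
     (\<forall>i\<in>\<Omega>. leq i i) \<and>
     (\<forall>i\<in>\<Omega>. \<forall>j\<in>\<Omega>. leq i j \<and> leq j i \<longrightarrow> i = j) \<and>
     (\<forall>i\<in>\<Omega>. \<forall>j\<in>\<Omega>. \<forall>k\<in>\<Omega>. leq i j \<and> leq j k \<longrightarrow> leq i k)"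

definition dual_rel :: "('i \<Rightarrow> 'i \<Rightarrow> bool) \<Rightarrow> 'i \<Rightarrow> 'i \<Rightarrow> bool" where
  "dual_rel leq = (\<lambda>i j. leq j i)"

definition down_closure :: "'i set \<Rightarrow> ('i \<Rightarrow> 'i \<Rightarrow> bool) \<Rightarrow> 'i set \<Rightarrow> 'i set" where
  "down_closure \<Omega> leq B = {j\<in>\<Omega>. \<exists>b\<in>B. leq j b}"

definition ideals :: "'i set \<Rightarrow> ('i \<Rightarrow> 'i \<Rightarrow> bool) \<Rightarrow> 'i set set" where
  "ideals \<Omega> leq = {I. I \<subseteq> \<Omega> \<and> (\<forall>i\<in>I. \<forall>j\<in>\<Omega>. leq j i \<longrightarrow> j \<in> I)}"

definition maxs :: "('i \<Rightarrow> 'i \<Rightarrow> bool) \<Rightarrow> 'i set \<Rightarrow> 'i set" where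
  "maxs leq B = {i\<in>B. \<not> (\<exists>j\<in>B. j \<noteq> i \<and> leq i j)}"

definition mins :: "('i \<Rightarrow> 'i \<Rightarrow> bool) \<Rightarrow> 'i set \<Rightarrow> 'i set" where
  "mins leq B = {i\<in>B. \<not> (\<exists>j\<in>B. j \<noteq> i \<and> leq j i)}"

definition character :: "('a, 'b) monoid_scheme \<Rightarrow> ('a \<Rightarrow> complex) \<Rightarrow> bool" where
  "character G \<chi> \<longleftrightarrow>
     (\<forall>x\<in>carrier G. norm (\<chi> x) = 1) \<and>
     (\<forall>x\<in>carrier G. \<forall>y\<in>carrier G. \<chi> (x \<otimes>\<^bsub>G\<^esub> y) = \<chi> x * \<chi> y)"

definition prod_carrier :: "'i set \<Rightarrow> ('i \<Rightarrow> ('a, 'b) monoid_scheme) \<Rightarrow> ('i \<Rightarrow> 'a) set" where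
  "prod_carrier \<Omega> G = (\<Pi>\<^sub>E i\<in>\<Omega>. carrier (G i))"

definition supp_word :: "'i set \<Rightarrow> ('i \<Rightarrow> ('a, 'b) monoid_scheme) \<Rightarrow> ('i \<Rightarrow> 'a) \<Rightarrow> 'i set" where
  "supp_word \<Omega> G \<beta> = {i\<in>\<Omega>. \<beta> i \<noteq> \<one>\<^bsub>G i\<^esub>}"

definition supp_char :: "'i set \<Rightarrow> ('i \<Rightarrow> ('a, 'b) monoid_scheme) \<Rightarrow> ('i \<Rightarrow> 'a \<Rightarrow> complex) \<Rightarrow> 'i set" where
  "supp_char \<Omega> G \<alpha> = {i\<in>\<Omega>. \<exists>x\<in>carrier (G i). \<alpha> i x \<noteq> 1}"

definition char_eval :: "'i set \<Rightarrow> ('i \<Rightarrow> 'a \<Rightarrow> complex) \<Rightarrow> ('i \<Rightarrow> 'a) \<Rightarrow> complex" where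
  "char_eval \<Omega> \<alpha> \<beta> = (\<Prod>i\<in>\<Omega>. \<alpha> i (\<beta> i))"

definition wtP :: "'i set \<Rightarrow> ('i \<Rightarrow> 'i \<Rightarrow> bool) \<Rightarrow> ('i \<Rightarrow> ('a, 'b) monoid_scheme) \<Rightarrow> ('i \<Rightarrow> 'a) \<Rightarrow> nat" where
  "wtP \<Omega> leq G \<beta> = card (down_closure \<Omega> leq (supp_word \<Omega> G \<beta>))"

definition F_poly :: "'i set \<Rightarrow> ('i \<Rightarrow> 'i \<Rightarrow> bool) \<Rightarrow> ('i \<Rightarrow> ('a, 'b) monoid_scheme)
    \<Rightarrow> ('i \<Rightarrow> 'a \<Rightarrow> complex) \<Rightarrow> complex poly" where
  "F_poly \<Omega> leq G \<alpha> =
     (\<Sum>l = 0..card \<Omega>. monom (\<Sum>\<beta>\<in>{\<beta>\<in>prod_carrier \<Omega> G. wtP \<Omega> leq G \<beta> = l}. char_eval \<Omega> \<alpha> \<beta>) l)"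

end

theory Submission
  imports Defs
begin

(* The words beta are grouped by the ideal I generated by their support, whose size is wt_P beta.
   A word generates I exactly when it is non-trivial on max I, arbitrary on I - max I and
   trivial outside I, so this fibre is a product set and the character sum over it factorises
   into coordinate sums.  By orthogonality of characters these are h_i or 0 over H_i, and
   h_i - 1 or -1 over H_i - {1}, according as alpha_i is trivial or not.  So the contribution
   of I vanishes as soon as a non-maximal element of I lies in supp alpha, which happens exactly
   when I is not contained in (Omega - D) union min D; for the other ideals, I meets D precisely in
   the maximal elements of I lying in supp alpha, and these are the ones in min D. *)

lemma character_one:
  assumes "monoid G" and "character G \<chi>"
  shows "\<chi> \<one>\<^bsub>G\<^esub> = 1"
proof -
  have "\<chi> \<one>\<^bsub>G\<^esub> * \<chi> \<one>\<^bsub>G\<^esub> = \<chi> \<one>\<^bsub>G\<^esub> * 1" and "\<chi> \<one>\<^bsub>G\<^esub> \<noteq> 0"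
    using assms monoid.one_closed[OF assms(1)] monoid.l_one[OF assms(1)]
    unfolding character_def by (metis mult_1_right, force)
  then show ?thesis by simp
qed

lemma character_sum:
  assumes "group G" and "finite (carrier G)" and "character G \<chi>"
  shows "(\<Sum>x\<in>carrier G. \<chi> x) =
    (if \<forall>x\<in>carrier G. \<chi> x = 1 then of_nat (card (carrier G)) else 0)"
proof (cases "\<forall>x\<in>carrier G. \<chi> x = 1")
  case False
  then obtain g where g: "g \<in> carrier G" "\<chi> g \<noteq> 1" by blast
  have "bij_betw (\<lambda>x. g \<otimes>\<^bsub>G\<^esub> x) (carrier G) (carrier G)"
    using group.inj_on_cmult[OF assms(1) g(1)] group.surj_const_mult[OF assms(1) g(1)]
    by (simp add: bij_betw_def)
  then have "(\<Sum>x\<in>carrier G. \<chi> x) = (\<Sum>x\<in>carrier G. \<chi> (g \<otimes>\<^bsub>G\<^esub> x))"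
    by (simp add: sum.reindex_bij_betw)
  also have "\<dots> = \<chi> g * (\<Sum>x\<in>carrier G. \<chi> x)"
    using assms(3) g(1) unfolding character_def by (simp add: sum_distrib_left)
  finally have "(1 - \<chi> g) * (\<Sum>x\<in>carrier G. \<chi> x) = 0" by (simp add: algebra_simps)
  then show ?thesis using g False by auto
qed simp

lemma character_sum_nonunit:
  assumes "group G" and "finite (carrier G)" and "character G \<chi>"
  shows "(\<Sum>x\<in>carrier G - {\<one>\<^bsub>G\<^esub>}. \<chi> x) =
    (if \<forall>x\<in>carrier G. \<chi> x = 1 then of_nat (card (carrier G)) - 1 else -1)"
  using sum_diff1[OF assms(2), of \<chi>] character_sum[OF assms] group.is_monoid[OF assms(1)]
    character_one[OF _ assms(3)] monoid.one_closed
  by simp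

lemma poset_on_refl: "poset_on \<Omega> leq \<Longrightarrow> i \<in> \<Omega> \<Longrightarrow> leq i i"
  unfolding poset_on_def by blast

lemma poset_on_antisym:
  "poset_on \<Omega> leq \<Longrightarrow> i \<in> \<Omega> \<Longrightarrow> j \<in> \<Omega> \<Longrightarrow> leq i j \<Longrightarrow> leq j i \<Longrightarrow> i = j"
  unfolding poset_on_def by blast

lemma poset_on_trans:
  "poset_on \<Omega> leq \<Longrightarrow> i \<in> \<Omega> \<Longrightarrow> j \<in> \<Omega> \<Longrightarrow> k \<in> \<Omega> \<Longrightarrow> leq i j \<Longrightarrow> leq j k
    \<Longrightarrow> leq i k"
  unfolding poset_on_def by blast

lemma ex_maxs_above:
  assumes po: "poset_on \<Omega> leq" and "finite \<Omega>" and "I \<subseteq> \<Omega>" and "i \<in> I"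
  shows "\<exists>m\<in>maxs leq I. leq i m"
proof -
  define above where "above j = {k\<in>I. leq j k}" for j
  have "leq i i" using poset_on_refl[OF po] assms(3,4) by blast
  then obtain m where m: "m \<in> I" "leq i m"
    and least: "\<And>j. j \<in> I \<Longrightarrow> leq i j \<Longrightarrow> card (above m) \<le> card (above j)"
    using ex_has_least_nat[of "\<lambda>j. j \<in> I \<and> leq i j" i "\<lambda>j. card (above j)"] assms(4) by blast
  have "m \<in> maxs leq I"
  proof (rule ccontr)
    assume "m \<notin> maxs leq I"
    then obtain j where j: "j \<in> I" "j \<noteq> m" "leq m j"
      using m(1) unfolding maxs_def by blast
    have \<Omega>: "i \<in> \<Omega>" "m \<in> \<Omega>" "j \<in> \<Omega>" using assms(3,4) m(1) j(1) by blast+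
    have "above j \<subseteq> above m"
      using poset_on_trans[OF po \<Omega>(2,3) _ j(3)] assms(3) unfolding above_def by blast
    moreover have "m \<in> above m" using poset_on_refl[OF po \<Omega>(2)] m(1) unfolding above_def by blast
    moreover have "m \<notin> above j"
      using poset_on_antisym[OF po \<Omega>(2,3) j(3)] j(2) unfolding above_def by (metis mem_Collect_eq)
    moreover have "finite (above m)"
      by (rule finite_subset[OF _ assms(2)]) (use assms(3) in \<open>auto simp: above_def\<close>)
    ultimately have "card (above j) < card (above m)"
      by (intro psubset_card_mono) auto
    moreover have "leq i j" using poset_on_trans[OF po \<Omega> m(2) j(3)] .
    ultimately show False using least[OF j(1)] by linarith
  qed
  with m(2) show ?thesis by blast
qed

lemma down_closure_in_ideals:
  assumes "poset_on \<Omega> leq" and "B \<subseteq> \<Omega>"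
  shows "down_closure \<Omega> leq B \<in> ideals \<Omega> leq"
  using assms unfolding ideals_def down_closure_def poset_on_def by blast

lemma finite_ideals:
  assumes "finite \<Omega>"
  shows "finite (ideals \<Omega> leq)"
proof (rule finite_subset)
  show "ideals \<Omega> leq \<subseteq> Pow \<Omega>" unfolding ideals_def by blast
qed (simp add: assms)

lemma down_closure_eq_ideal_iff:
  assumes "poset_on \<Omega> leq" and "finite \<Omega>" and "I \<in> ideals \<Omega> leq" and "B \<subseteq> \<Omega>"
  shows "down_closure \<Omega> leq B = I \<longleftrightarrow> B \<subseteq> I \<and> maxs leq I \<subseteq> B"
proof
  assume eq: "down_closure \<Omega> leq B = I"
  then have "B \<subseteq> I"
    using assms(1,4) unfolding down_closure_def poset_on_def by blast
  moreover have "maxs leq I \<subseteq> B"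
  proof
    fix m assume m: "m \<in> maxs leq I"
    then obtain b where "b \<in> B" "leq m b"
      using eq unfolding maxs_def down_closure_def by blast
    with m \<open>B \<subseteq> I\<close> show "m \<in> B" unfolding maxs_def by auto
  qed
  ultimately show "B \<subseteq> I \<and> maxs leq I \<subseteq> B" ..
next
  assume B: "B \<subseteq> I \<and> maxs leq I \<subseteq> B"
  have "I \<subseteq> \<Omega>" using assms(3) unfolding ideals_def by blast
  then have "I \<subseteq> down_closure \<Omega> leq B"
    using ex_maxs_above[OF assms(1,2)] B unfolding down_closure_def by blast
  moreover have "down_closure \<Omega> leq B \<subseteq> I"
    using B assms(3) unfolding down_closure_def ideals_def by blast
  ultimately show "down_closure \<Omega> leq B = I" by blast
qed

lemma mem_up_closure_iff:
  "j \<in> down_closure \<Omega> (dual_rel leq) S \<longleftrightarrow> j \<in> \<Omega> \<and> (\<exists>s\<in>S. leq s j)"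
  unfolding down_closure_def dual_rel_def by blast

lemma subset_up_closure:
  assumes "poset_on \<Omega> leq" and "S \<subseteq> \<Omega>"
  shows "S \<subseteq> down_closure \<Omega> (dual_rel leq) S"
proof
  fix s assume s: "s \<in> S"
  with assms(2) have "s \<in> \<Omega>" by blast
  with s show "s \<in> down_closure \<Omega> (dual_rel leq) S"
    unfolding mem_up_closure_iff using poset_on_refl[OF assms(1)] by blast
qed

lemma ideal_inter_up_closure:
  assumes "poset_on \<Omega> leq" and "I \<in> ideals \<Omega> leq" and "S \<subseteq> \<Omega>"
    and D: "D = down_closure \<Omega> (dual_rel leq) S" and "(I - maxs leq I) \<inter> S = {}"
  shows "I \<inter> D = maxs leq I \<inter> S"
proof
  show "I \<inter> D \<subseteq> maxs leq I \<inter> S"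
  proof
    fix i assume i: "i \<in> I \<inter> D"
    then obtain s where s: "s \<in> S" "leq s i"
      unfolding D by (auto simp: mem_up_closure_iff)
    then have "s \<in> maxs leq I"
      using assms(2,3,5) i unfolding ideals_def by blast
    moreover from this i s have "s = i" unfolding maxs_def by auto
    ultimately show "i \<in> maxs leq I \<inter> S" using s by blast
  qed
  show "maxs leq I \<inter> S \<subseteq> I \<inter> D"
    using subset_up_closure[OF assms(1,3)] unfolding D maxs_def by blast
qed

lemma ideal_subset_compl_Un_mins_iff:
  assumes "poset_on \<Omega> leq" and "I \<in> ideals \<Omega> leq" and "S \<subseteq> \<Omega>"
    and D: "D = down_closure \<Omega> (dual_rel leq) S"
  shows "I \<subseteq> (\<Omega> - D) \<union> mins leq D \<longleftrightarrow> (I - maxs leq I) \<inter> S = {}"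
proof
  assume I: "I \<subseteq> (\<Omega> - D) \<union> mins leq D"
  show "(I - maxs leq I) \<inter> S = {}"
  proof (rule ccontr)
    assume "(I - maxs leq I) \<inter> S \<noteq> {}"
    then obtain i j where i: "i \<in> S" "i \<in> I" and j: "j \<in> I" "j \<noteq> i" "leq i j"
      unfolding maxs_def by blast
    have "i \<in> D" using subset_up_closure[OF assms(1,3)] i(1) unfolding D by blast
    have "j \<in> \<Omega>" using assms(2) j(1) unfolding ideals_def by blast
    then have "j \<in> D" using i(1) j(3) unfolding D mem_up_closure_iff by blast
    with I j(1) have "j \<in> mins leq D" by blast
    with \<open>i \<in> D\<close> j show False unfolding mins_def by auto
  qed
next
  assume disj: "(I - maxs leq I) \<inter> S = {}"
  have maxs: "I \<inter> D \<subseteq> maxs leq I"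
    using ideal_inter_up_closure[OF assms disj] by blast
  have "I \<inter> D \<subseteq> mins leq D"
  proof
    fix i assume i: "i \<in> I \<inter> D"
    have "\<not> leq j i" if j: "j \<in> D" "j \<noteq> i" for j
    proof
      assume "leq j i"
      moreover have "j \<in> \<Omega>" using j(1) unfolding D down_closure_def by blast
      ultimately have "j \<in> maxs leq I"
        using assms(2) i j(1) maxs unfolding ideals_def by blast
      with i j(2) \<open>leq j i\<close> show False unfolding maxs_def by auto
    qed
    with i show "i \<in> mins leq D" unfolding mins_def by blast
  qed
  moreover have "I \<subseteq> \<Omega>" using assms(2) unfolding ideals_def by blast
  ultimately show "I \<subseteq> (\<Omega> - D) \<union> mins leq D" by blast
qed

lemma prod_ideal_layers:
  fixes h :: "'i \<Rightarrow> 'r::comm_ring_1"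
  assumes "finite \<Omega>" and "M \<subseteq> I" and "I \<subseteq> \<Omega>"
  shows "(\<Prod>i\<in>\<Omega>. if i \<in> M then (if i \<in> S then -1 else h i - 1)
                  else if i \<in> I then (if i \<in> S then 0 else h i) else 1) =
    (if (I - M) \<inter> S = {}
     then (-1) ^ card (M \<inter> S) * (\<Prod>i\<in>I - M. h i) * (\<Prod>i\<in>M - S. h i - 1) else 0)"
    (is "prod ?f \<Omega> = _")
proof -
  have fin: "finite I" "finite M"
    using finite_subset[OF assms(3,1)] finite_subset[OF assms(2)] by blast+
  have "prod ?f \<Omega> = prod ?f (\<Omega> - I) * prod ?f I" by (rule prod.subset_diff[OF assms(3,1)])
  also have "prod ?f (\<Omega> - I) = 1" by (rule prod.neutral) (use assms(2) in auto)
  also have "prod ?f I = prod ?f (I - M) * prod ?f M" by (rule prod.subset_diff[OF assms(2) fin(1)])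
  also have "prod ?f (I - M) = (\<Prod>i\<in>I - M. if i \<in> S then 0 else h i)" by (rule prod.cong) auto
  also have "\<dots> = (if (I - M) \<inter> S = {} then \<Prod>i\<in>I - M. h i else 0)"
  proof (cases "(I - M) \<inter> S = {}")
    case False
    then obtain j where "j \<in> I - M" "j \<in> S" by blast
    with fin(1) have "(\<Prod>i\<in>I - M. if i \<in> S then 0 else h i) = 0"
      by (intro prod_zero) auto
    with False show ?thesis by simp
  qed (auto intro!: prod.cong)
  also have "prod ?f M = (\<Prod>i\<in>M. if i \<in> S then -1 else h i - 1)" by (rule prod.cong) auto
  also have "\<dots> = (-1) ^ card (M \<inter> S) * (\<Prod>i\<in>M - S. h i - 1)"
    using prod.If_cases[OF fin(2), of "\<lambda>i. i \<in> S" "\<lambda>_. -1" "\<lambda>i. h i - 1"]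
    by (simp add: Diff_eq)
  finally show ?thesis by simp
qed

definition supp_ideal_fibre ::
    "'i set \<Rightarrow> ('i \<Rightarrow> 'i \<Rightarrow> bool) \<Rightarrow> ('i \<Rightarrow> ('a, 'b) monoid_scheme) \<Rightarrow> 'i set \<Rightarrow> ('i \<Rightarrow> 'a) set"
  where "supp_ideal_fibre \<Omega> leq G I =
    {\<beta>\<in>prod_carrier \<Omega> G. down_closure \<Omega> leq (supp_word \<Omega> G \<beta>) = I}"

lemma supp_ideal_fibre_eq_PiE:
  assumes "poset_on \<Omega> leq" and "finite \<Omega>" and "\<And>i. i \<in> \<Omega> \<Longrightarrow> monoid (G i)"
    and "I \<in> ideals \<Omega> leq"
  shows "supp_ideal_fibre \<Omega> leq G I =
    (\<Pi>\<^sub>E i\<in>\<Omega>. if i \<in> maxs leq I then carrier (G i) - {\<one>\<^bsub>G i\<^esub>}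
              else if i \<in> I then carrier (G i) else {\<one>\<^bsub>G i\<^esub>})"
    (is "_ = PiE \<Omega> ?A")
proof (rule Set.set_eqI)
  fix \<beta>
  have "maxs leq I \<subseteq> I" using assms(4) unfolding maxs_def by auto
  moreover have "\<one>\<^bsub>G i\<^esub> \<in> carrier (G i)" if "i \<in> \<Omega>" for i
    using assms(3)[OF that] by (rule monoid.one_closed)
  ultimately have coordinate: "\<beta> i \<in> ?A i \<longleftrightarrow>
      \<beta> i \<in> carrier (G i) \<and> (\<beta> i \<noteq> \<one>\<^bsub>G i\<^esub> \<longrightarrow> i \<in> I) \<and> (i \<in> maxs leq I \<longrightarrow> \<beta> i \<noteq> \<one>\<^bsub>G i\<^esub>)"
    if "i \<in> \<Omega>" for i
    using that by auto
  have "maxs leq I \<subseteq> \<Omega>"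
    using \<open>maxs leq I \<subseteq> I\<close> assms(4) unfolding ideals_def by blast
  have "supp_word \<Omega> G \<beta> \<subseteq> \<Omega>" unfolding supp_word_def by blast
  then have "\<beta> \<in> supp_ideal_fibre \<Omega> leq G I \<longleftrightarrow>
      \<beta> \<in> prod_carrier \<Omega> G \<and> supp_word \<Omega> G \<beta> \<subseteq> I \<and> maxs leq I \<subseteq> supp_word \<Omega> G \<beta>"
    unfolding supp_ideal_fibre_def using down_closure_eq_ideal_iff[OF assms(1,2,4)] by simp
  also have "\<dots> \<longleftrightarrow> \<beta> \<in> prod_carrier \<Omega> G \<and>
      (\<forall>i\<in>\<Omega>. \<beta> i \<noteq> \<one>\<^bsub>G i\<^esub> \<longrightarrow> i \<in> I) \<and> (\<forall>i\<in>\<Omega>. i \<in> maxs leq I \<longrightarrow> \<beta> i \<noteq> \<one>\<^bsub>G i\<^esub>)"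
    using \<open>maxs leq I \<subseteq> \<Omega>\<close> unfolding supp_word_def by blast
  also have "\<dots> \<longleftrightarrow> \<beta> \<in> PiE \<Omega> ?A"
    unfolding prod_carrier_def PiE_iff using coordinate by auto
  finally show "\<beta> \<in> supp_ideal_fibre \<Omega> leq G I \<longleftrightarrow> \<beta> \<in> PiE \<Omega> ?A" .
qed

lemma sum_char_eval_supp_ideal_fibre:
  assumes "poset_on \<Omega> leq" and "finite \<Omega>"
    and "\<And>i. i \<in> \<Omega> \<Longrightarrow> group (G i)" and "\<And>i. i \<in> \<Omega> \<Longrightarrow> finite (carrier (G i))"
    and "\<And>i. i \<in> \<Omega> \<Longrightarrow> character (G i) (\<alpha> i)" and "I \<in> ideals \<Omega> leq"
  shows "(\<Sum>\<beta>\<in>supp_ideal_fibre \<Omega> leq G I. char_eval \<Omega> \<alpha> \<beta>) =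
    (if (I - maxs leq I) \<inter> supp_char \<Omega> G \<alpha> = {}
     then (-1) ^ card (maxs leq I \<inter> supp_char \<Omega> G \<alpha>)
        * (\<Prod>i\<in>I - maxs leq I. of_nat (card (carrier (G i))))
        * (\<Prod>i\<in>maxs leq I - supp_char \<Omega> G \<alpha>. of_nat (card (carrier (G i))) - 1)
     else 0)"
proof -
  let ?S = "supp_char \<Omega> G \<alpha>"
  let ?h = "\<lambda>i. of_nat (card (carrier (G i))) :: complex"
  let ?A = "\<lambda>i. if i \<in> maxs leq I then carrier (G i) - {\<one>\<^bsub>G i\<^esub>}
                else if i \<in> I then carrier (G i) else {\<one>\<^bsub>G i\<^esub>}"
  have coordinate_sum: "(\<Sum>x\<in>?A i. \<alpha> i x) =
      (if i \<in> maxs leq I then (if i \<in> ?S then -1 else ?h i - 1)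
       else if i \<in> I then (if i \<in> ?S then 0 else ?h i) else 1)" if "i \<in> \<Omega>" for i
    using character_sum[OF assms(3-5)[OF that]] character_sum_nonunit[OF assms(3-5)[OF that]]
      character_one[OF group.is_monoid assms(5)[OF that]] assms(3)[OF that] that
    by (auto simp: supp_char_def)
  have "supp_ideal_fibre \<Omega> leq G I = PiE \<Omega> ?A"
    using supp_ideal_fibre_eq_PiE[OF assms(1,2) _ assms(6)] assms(3) group.is_monoid by blast
  then have "(\<Sum>\<beta>\<in>supp_ideal_fibre \<Omega> leq G I. char_eval \<Omega> \<alpha> \<beta>) = (\<Prod>i\<in>\<Omega>. \<Sum>x\<in>?A i. \<alpha> i x)"
    unfolding char_eval_def using prod_sum_PiE[where f = \<alpha> and A = \<Omega> and B = ?A] assms(2,4) by simp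
  also have "\<dots> = (\<Prod>i\<in>\<Omega>. if i \<in> maxs leq I then (if i \<in> ?S then -1 else ?h i - 1)
                    else if i \<in> I then (if i \<in> ?S then 0 else ?h i) else 1)"
    using coordinate_sum by (rule prod.cong[OF refl])
  moreover have "maxs leq I \<subseteq> I" "I \<subseteq> \<Omega>" using assms(6) unfolding maxs_def ideals_def by auto
  ultimately show ?thesis by (simp only: prod_ideal_layers[OF assms(2)])
qed

lemma sum_char_eval_supp_ideal_fibre_up_closure:
  assumes "poset_on \<Omega> leq" and "finite \<Omega>"
    and "\<And>i. i \<in> \<Omega> \<Longrightarrow> group (G i)" and "\<And>i. i \<in> \<Omega> \<Longrightarrow> finite (carrier (G i))"
    and "\<And>i. i \<in> \<Omega> \<Longrightarrow> character (G i) (\<alpha> i)"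
    and "down_closure \<Omega> (dual_rel leq) (supp_char \<Omega> G \<alpha>) = D" and I: "I \<in> ideals \<Omega> leq"
  shows "(\<Sum>\<beta>\<in>supp_ideal_fibre \<Omega> leq G I. char_eval \<Omega> \<alpha> \<beta>) =
    (if I \<subseteq> (\<Omega> - D) \<union> mins leq D
     then (-1) ^ card (I \<inter> D) * (\<Prod>i\<in>I - maxs leq I. of_nat (card (carrier (G i))))
        * (\<Prod>i\<in>maxs leq I - mins leq D. of_nat (card (carrier (G i))) - 1)
     else 0)"
proof -
  define S where "S = supp_char \<Omega> G \<alpha>"
  have S: "S \<subseteq> \<Omega>" "D = down_closure \<Omega> (dual_rel leq) S"
    using assms(6) unfolding S_def supp_char_def by auto
  note fibre_sum = sum_char_eval_supp_ideal_fibre[of \<Omega> leq G \<alpha> I, folded S_def]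
  show ?thesis
  proof (cases "(I - maxs leq I) \<inter> S = {}")
    case True
    have "I \<subseteq> (\<Omega> - D) \<union> mins leq D" "I \<inter> D = maxs leq I \<inter> S"
      using ideal_subset_compl_Un_mins_iff[OF assms(1) I S] ideal_inter_up_closure[OF assms(1) I S]
        True by auto
    moreover from this have "maxs leq I - mins leq D = maxs leq I - S"
      unfolding maxs_def mins_def by blast
    ultimately show ?thesis using fibre_sum assms(1-5) I True by simp
  next
    case False
    then show ?thesis
      using fibre_sum assms(1-5) I ideal_subset_compl_Un_mins_iff[OF assms(1) I S] by simp
  qed
qed

lemma F_poly_eq_sum_ideals:
  assumes "finite \<Omega>" and "poset_on \<Omega> leq" and "\<And>i. i \<in> \<Omega> \<Longrightarrow> finite (carrier (G i))"
  shows "F_poly \<Omega> leq G \<alpha> =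
    (\<Sum>I\<in>ideals \<Omega> leq. monom (\<Sum>\<beta>\<in>supp_ideal_fibre \<Omega> leq G I. char_eval \<Omega> \<alpha> \<beta>) (card I))"
proof -
  let ?H = "prod_carrier \<Omega> G"
  let ?term = "\<lambda>\<beta>. monom (char_eval \<Omega> \<alpha> \<beta>) (wtP \<Omega> leq G \<beta>)"
  have "finite ?H" unfolding prod_carrier_def using assms(1,3) by (rule finite_PiE)
  have "wtP \<Omega> leq G \<beta> \<in> {0..card \<Omega>}" for \<beta>
    unfolding wtP_def down_closure_def using assms(1) by (auto intro: card_mono)
  then have "F_poly \<Omega> leq G \<alpha> = (\<Sum>\<beta>\<in>?H. ?term \<beta>)"
    unfolding F_poly_def monom_sum using \<open>finite ?H\<close>
    by (subst sum.group[symmetric, where g = "wtP \<Omega> leq G"]) (auto intro!: sum.cong)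
  also have "\<dots> = (\<Sum>I\<in>ideals \<Omega> leq. \<Sum>\<beta>\<in>supp_ideal_fibre \<Omega> leq G I. ?term \<beta>)"
    unfolding supp_ideal_fibre_def using \<open>finite ?H\<close> finite_ideals[OF assms(1)]
    by (intro sum.group[symmetric]) (auto intro!: down_closure_in_ideals[OF assms(2)] simp: supp_word_def)
  also have "\<dots> = (\<Sum>I\<in>ideals \<Omega> leq. monom (\<Sum>\<beta>\<in>supp_ideal_fibre \<Omega> leq G I. char_eval \<Omega> \<alpha> \<beta>) (card I))"
    unfolding monom_sum by (auto intro!: sum.cong simp: supp_ideal_fibre_def wtP_def)
  finally show ?thesis .
qed

theorem theorem2p1:
  fixes \<Omega> :: "'i set"
    and G :: "'i \<Rightarrow> ('a, 'b) monoid_scheme"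
    and leq :: "'i \<Rightarrow> 'i \<Rightarrow> bool"
    and \<alpha> :: "'i \<Rightarrow> 'a \<Rightarrow> complex"
    and D :: "'i set"
  assumes "finite \<Omega>"
    and "\<And>i. i \<in> \<Omega> \<Longrightarrow> comm_group (G i)"
    and "\<And>i. i \<in> \<Omega> \<Longrightarrow> finite (carrier (G i))"
    and "poset_on \<Omega> leq"
    and "\<And>i. i \<in> \<Omega> \<Longrightarrow> character (G i) (\<alpha> i)"
    and "down_closure \<Omega> (dual_rel leq) (supp_char \<Omega> G \<alpha>) = D"
  shows "F_poly \<Omega> leq G \<alpha> =
    (\<Sum>I\<in>{I\<in>ideals \<Omega> leq. I \<subseteq> (\<Omega> - D) \<union> mins leq D}.
       monom ((-1) ^ card (I \<inter> D)
              * (\<Prod>i\<in>I - maxs leq I. of_nat (card (carrier (G i))))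
              * (\<Prod>i\<in>maxs leq I - mins leq D. of_nat (card (carrier (G i))) - 1))
             (card I))"
proof -
  have "\<And>i. i \<in> \<Omega> \<Longrightarrow> group (G i)" using assms(2) comm_group.axioms(2) by blast
  with assms show ?thesis
    by (simp add: F_poly_eq_sum_ideals finite_ideals sum.inter_filter sum_char_eval_supp_ideal_fibre_up_closure
        cong: sum.cong_simp)
      (rule sum.cong; simp)
qed

end
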